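(* Let $\Lambda_1,\dots,\Lambda_m$ be mutually disjoint bounded open sets in $\mathbb R^d$ and $\Lambda=\bigcup_{j=1}^m\Lambda_j$. Let $E\subseteq\partial\Lambda$ be closed and $E_j=\partial\Lambda_j\cap E$. Then: (i) $E=\bigcup_{j=1}^mE_j$. (ii) Suppose that $\overline{\Lambda_j}\cap\overline{\Lambda_i}\subseteq E$ for every pair of indices $i\ne j$. For fixed $j$ and $\psi\in C^\infty_{E_j}(\Lambda_j)$, let $\Psi\in C^\infty_E(\mathbb R^d)$ be any function whose restriction to $\Lambda_j$ equals $\psi$. Then $\operatorname{supp}\Psi\cap\overline{\Lambda_j}$ and $\operatorname{supp}\Psi\cap\bigcup_{k\ne j}\overline{\Lambda_k}$ have positive distance to each other.
   Context: For an open set $\Lambda\subset\mathbb R^d$ and closed $F\subset\partial\Lambda$, $C^\infty_F(\Lambda)=\{v|_\Lambda: v\in C^\infty_0(\mathbb R^d),\ \operatorname{supp}v\cap F=\emptyset\}$; $C^\infty_E(\mathbb R^d)$ denotes the set of $v\in C^\infty_0(\mathbb R^d)$ with $\operatorname{supp}v\cap E=\emptyset$. *)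

theory Defs
  imports "HOL-Analysis.Analysis"
begin

coinductive smooth :: "('a::euclidean_space \<Rightarrow> real) \<Rightarrow> bool" where
  "(\<forall>x. f differentiable (at x)) \<Longrightarrow>
   (\<forall>u\<in>Basis. smooth (\<lambda>x. frechet_derivative f (at x) u)) \<Longrightarrow> smooth f"

definition supp :: "('a::euclidean_space \<Rightarrow> real) \<Rightarrow> 'a set" where
  "supp v = closure {x. v x \<noteq> 0}"

definition Cinf0 :: "('a::euclidean_space \<Rightarrow> real) set" where
  "Cinf0 = {v. smooth v \<and> compact (supp v)}"

definition CinfE :: "'a::euclidean_space set \<Rightarrow> ('a \<Rightarrow> real) set" where
  "CinfE E = {v \<in> Cinf0. supp v \<inter> E = {}}"

text \<open>C^\<infinity>_F(\<Lambda>): functions agreeing on \<Lambda> with some v in C^\<infinity>_F(R^d)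
  (functions on \<Lambda> represented by total functions; only values on \<Lambda> matter).\<close>
definition CinfF_on :: "'a::euclidean_space set \<Rightarrow> 'a set \<Rightarrow> ('a \<Rightarrow> real) set" where
  "CinfF_on \<Lambda> F = {\<psi>. \<exists>v \<in> CinfE F. \<forall>x\<in>\<Lambda>. \<psi> x = v x}"

text \<open>Two sets have positive distance (vacuous if one of them is empty).\<close>
definition pos_dist :: "'a::metric_space set \<Rightarrow> 'a set \<Rightarrow> bool" where
  "pos_dist A B \<longleftrightarrow> (\<exists>\<delta>>0. \<forall>x\<in>A. \<forall>y\<in>B. \<delta> \<le> dist x y)"

end

theory Submission
  imports Defs
begin

text \<open>Part (i) is the inclusion of the frontier of a finite union in the union of the frontiers.
  For part (ii), supp \<Psi> is compact and misses E, which contains every overlap of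
  two closures; so the two sets are a compact set and a disjoint closed set, and these are at
  positive distance.\<close>

lemma frontier_UN_subset:
  fixes A :: "'i \<Rightarrow> 'a::real_normed_vector set"
  assumes "finite I"
  shows "frontier (\<Union>i\<in>I. A i) \<subseteq> (\<Union>i\<in>I. frontier (A i))"
  using frontier_Union_subset[of "A ` I"] assms by auto

lemma pos_dist_compact_closed:
  fixes A B :: "'a::heine_borel set"
  assumes "compact A" and "closed B" and "A \<inter> B = {}"
  shows "pos_dist A B"
  using separate_compact_closed[OF assms] unfolding pos_dist_def .

lemma CinfE_supp:
  assumes "\<Psi> \<in> CinfE E"
  shows "compact (supp \<Psi>)" and "supp \<Psi> \<inter> E = {}"
  using assms by (auto simp: CinfE_def Cinf0_def)

lemma pos_dist_Int_closure_UN: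
  fixes C :: "'i \<Rightarrow> 'a::heine_borel set"
  assumes "compact K" and "K \<inter> E = {}" and "finite I"
    and overlap: "\<And>k. k \<in> I \<Longrightarrow> closure (C j) \<inter> closure (C k) \<subseteq> E"
  shows "pos_dist (K \<inter> closure (C j)) (K \<inter> (\<Union>k\<in>I. closure (C k)))"
proof (rule pos_dist_compact_closed)
  show "compact (K \<inter> closure (C j))"
    using \<open>compact K\<close> by (simp add: compact_Int_closed)
  show "closed (K \<inter> (\<Union>k\<in>I. closure (C k)))"
    using \<open>compact K\<close> \<open>finite I\<close> by (intro closed_Int closed_UN) (auto intro: compact_imp_closed)
  show "(K \<inter> closure (C j)) \<inter> (K \<inter> (\<Union>k\<in>I. closure (C k))) = {}"
    using overlap \<open>K \<inter> E = {}\<close> by blast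
qed

theorem lemma4p4:
  fixes \<Lambda> :: "nat \<Rightarrow> 'a::euclidean_space set" and m :: nat and E :: "'a set"
  assumes opn: "\<And>j. j \<in> {1..m} \<Longrightarrow> open (\<Lambda> j)"
    and bdd: "\<And>j. j \<in> {1..m} \<Longrightarrow> bounded (\<Lambda> j)"
    and disj: "\<And>i j. i \<in> {1..m} \<Longrightarrow> j \<in> {1..m} \<Longrightarrow> i \<noteq> j \<Longrightarrow> \<Lambda> i \<inter> \<Lambda> j = {}"
    and clE: "closed E"
    and Esub: "E \<subseteq> frontier (\<Union>j\<in>{1..m}. \<Lambda> j)"
  shows "E = (\<Union>j\<in>{1..m}. frontier (\<Lambda> j) \<inter> E) \<and>
         ((\<forall>i\<in>{1..m}. \<forall>j\<in>{1..m}. i \<noteq> j \<longrightarrow> closure (\<Lambda> j) \<inter> closure (\<Lambda> i) \<subseteq> E) \<longrightarrow>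
          (\<forall>j\<in>{1..m}. \<forall>\<psi> \<in> CinfF_on (\<Lambda> j) (frontier (\<Lambda> j) \<inter> E).
             \<forall>\<Psi> \<in> CinfE E. (\<forall>x\<in>\<Lambda> j. \<Psi> x = \<psi> x) \<longrightarrow>
             pos_dist (supp \<Psi> \<inter> closure (\<Lambda> j)) (supp \<Psi> \<inter> (\<Union>k\<in>{1..m}-{j}. closure (\<Lambda> k)))))"
proof (intro conjI impI ballI)
  show "E = (\<Union>j\<in>{1..m}. frontier (\<Lambda> j) \<inter> E)"
    using Esub frontier_UN_subset[of "{1..m}" \<Lambda>] by auto
next
  fix j \<psi> \<Psi>
  assume overlap: "\<forall>i\<in>{1..m}. \<forall>j\<in>{1..m}. i \<noteq> j \<longrightarrow> closure (\<Lambda> j) \<inter> closure (\<Lambda> i) \<subseteq> E"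
    and "j \<in> {1..m}" and "\<Psi> \<in> CinfE E"
  show "pos_dist (supp \<Psi> \<inter> closure (\<Lambda> j)) (supp \<Psi> \<inter> (\<Union>k\<in>{1..m}-{j}. closure (\<Lambda> k)))"
  proof (rule pos_dist_Int_closure_UN)
    show "closure (\<Lambda> j) \<inter> closure (\<Lambda> k) \<subseteq> E" if "k \<in> {1..m}-{j}" for k
      using overlap \<open>j \<in> {1..m}\<close> that by blast
  qed (use CinfE_supp[OF \<open>\<Psi> \<in> CinfE E\<close>] in auto)
qed

end
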